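(* Let $\Bbbk$ be a field of characteristic zero. For $n\in\mathbb Z$ let $\mathcal F_n\mathcal O=\mathrm{span}\{\mathcal U_k\mid k\ge n,\ k\ge-1\}$ and $\mathcal F_n\mathcal P=\mathrm{span}\{\mathcal V_k\mid k\ge n,\ k\ge -1\}$. Then $[\mathcal F_n\mathcal O,\mathcal F_m\mathcal P]\subseteq\mathcal F_{n+m}\mathcal P$ for all $n,m\in\mathbb Z$. Consequently, setting $\mathcal F_n\mathfrak b=\mathcal F_n\mathcal O\ltimes\mathcal F_n\mathcal P=\mathrm{span}\{\mathcal U_k,\mathcal V_k\mid k\ge n,\ k\ge-1\}$, one has $[\mathcal F_n\mathfrak b,\mathcal F_m\mathfrak b]\subseteq\mathcal F_{n+m}\mathfrak b$ for all $n,m$, and $\mathfrak b=\mathcal F_{-1}\mathfrak b\supseteq\mathcal F_0\mathfrak b\supseteq\mathcal F_1\mathfrak b\supseteq\cdots$, so $\mathcal F$ is a filtration of $\mathfrak b$.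
   Context: The centreless BCCA $\mathfrak b=\mathcal O\ltimes\mathcal P$ has a basis $\{u_n,v_m\mid n\ge1,m\ge0\}$ with $[u_n,u_m]=(n-m)(u_{n+m}-4u_{n+m-2})$, $[u_n,v_m]=(n-m)v_{n+m}-4(n-m-1)v_{n+m-2}$, $[v_n,v_m]=0$, where $\mathcal O=\mathrm{span}\{u_n\}$ and $\mathcal P=\mathrm{span}\{v_m\}$. Set $\mathcal U_n=u_{n+2}$ and $\mathcal V_n=v_{n+1}$ for $n\ge-1$. *)

theory Defs
  imports Main
begin

text \<open>Basis of the centreless BCCA b, in the shifted indexing of the paper:
  U k = u_(k+2) and V k = v_(k+1), for k >= -1.  Elements of b are
  finitely supported coefficient functions on this basis.\<close>

datatype basis = U int | V int

definition valid :: "basis \<Rightarrow> bool" where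
  "valid b = (case b of U k \<Rightarrow> k \<ge> -1 | V k \<Rightarrow> k \<ge> -1)"

definition e :: "basis \<Rightarrow> basis \<Rightarrow> 'k::field" where
  "e b = (\<lambda>c. if c = b then 1 else 0)"

definition lin_span :: "(basis \<Rightarrow> 'k::field) set \<Rightarrow> (basis \<Rightarrow> 'k) set" where
  "lin_span S = {x. \<exists>A c. finite A \<and> A \<subseteq> S \<and> x = (\<lambda>b. \<Sum>a\<in>A. c a * a b)}"

definition uu :: "int \<Rightarrow> basis \<Rightarrow> 'k::field" where "uu n = e (U (n - 2))"
definition vv :: "int \<Rightarrow> basis \<Rightarrow> 'k::field" where "vv m = e (V (m - 1))"

text \<open>Structure constants: coefficient of basis vector c in [a,b], following
  [u_n,u_m] = (n-m)(u_(n+m) - 4 u_(n+m-2)),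
  [u_n,v_m] = (n-m) v_(n+m) - 4(n-m-1) v_(n+m-2), [v_n,v_m] = 0.\<close>
fun sc :: "basis \<Rightarrow> basis \<Rightarrow> basis \<Rightarrow> 'k::field" where
  "sc (U a) (U b) c = (let n = a + 2; m = b + 2 in
      of_int (n - m) * uu (n + m) c - 4 * of_int (n - m) * uu (n + m - 2) c)"
| "sc (U a) (V b) c = (let n = a + 2; m = b + 1 in
      of_int (n - m) * vv (n + m) c - 4 * of_int (n - m - 1) * vv (n + m - 2) c)"
| "sc (V a) (U b) c = (let n = b + 2; m = a + 1 in
      - (of_int (n - m) * vv (n + m) c - 4 * of_int (n - m - 1) * vv (n + m - 2) c))"
| "sc (V a) (V b) c = 0"

definition supp :: "(basis \<Rightarrow> 'k::field) \<Rightarrow> basis set" where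
  "supp x = {b. x b \<noteq> 0}"

definition brk :: "(basis \<Rightarrow> 'k::field) \<Rightarrow> (basis \<Rightarrow> 'k) \<Rightarrow> (basis \<Rightarrow> 'k)" where
  "brk x y = (\<lambda>c. \<Sum>a\<in>supp x. \<Sum>b\<in>supp y. x a * y b * sc a b c)"

definition bcca :: "(basis \<Rightarrow> 'k::field) set" where
  "bcca = lin_span {e b | b. valid b}"

definition FO :: "int \<Rightarrow> (basis \<Rightarrow> 'k::field) set" where
  "FO n = lin_span {e (U k) | k. k \<ge> n \<and> k \<ge> -1}"

definition FP :: "int \<Rightarrow> (basis \<Rightarrow> 'k::field) set" where
  "FP n = lin_span {e (V k) | k. k \<ge> n \<and> k \<ge> -1}"

definition Fb :: "int \<Rightarrow> (basis \<Rightarrow> 'k::field) set" where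
  "Fb n = lin_span ({e (U k) | k. k \<ge> n \<and> k \<ge> -1} \<union> {e (V k) | k. k \<ge> n \<and> k \<ge> -1})"

end

theory Submission
  imports Defs
begin

text \<open>Writing deg for the index k of U k and V k, the bracket of two basis vectors is a
  combination of basis vectors of degree deg a + deg b + 2 and deg a + deg b, and a product of
  a U with a V only involves V's.  The term of degree deg a + deg b carries the factor
  deg a - deg b, so it vanishes when both factors have degree -1, and the bracket of two valid
  basis vectors is again valid.  Since a span of basis vectors consists exactly of the finitely
  supported functions supported on those vectors, all claims reduce to these support
  computations.\<close>

lemma inj_e: "inj (e :: basis \<Rightarrow> basis \<Rightarrow> 'k::field)"
proof
  fix a b :: basis
  assume "(e a :: basis \<Rightarrow> 'k) = e b"
  then have "(e a :: basis \<Rightarrow> 'k) a = e b a" by simp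
  then show "a = b" by (auto simp: e_def split: if_splits)
qed

lemma lin_span_basis_eq:
  "(lin_span {e b | b. P b} :: (basis \<Rightarrow> 'k::field) set) = {x. finite (supp x) \<and> supp x \<subseteq> Collect P}"
proof (intro set_eqI iffI)
  fix x :: "basis \<Rightarrow> 'k"
  assume "x \<in> lin_span {e b | b. P b}"
  then obtain A c where A: "finite A" "A \<subseteq> {e b | b. P b}" and x: "x = (\<lambda>b. \<Sum>a\<in>A. c a * a b)"
    unfolding lin_span_def by blast
  have supp_x: "supp x \<subseteq> {b. e b \<in> A \<and> P b}"
  proof
    fix b
    assume "b \<in> supp x"
    then have "(\<Sum>a\<in>A. c a * a b) \<noteq> 0" using x by (simp add: supp_def)
    then obtain a where "a \<in> A" "c a * a b \<noteq> 0" by (meson sum.neutral)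
    moreover from \<open>a \<in> A\<close> obtain b' where "a = e b'" "P b'" using A by blast
    ultimately show "b \<in> {b. e b \<in> A \<and> P b}" by (auto simp: e_def split: if_splits)
  qed
  have "finite {b. e b \<in> A}"
    using finite_vimageI[OF A(1) inj_e] by (simp add: vimage_def)
  then have "finite (supp x)" by (rule rev_finite_subset) (use supp_x in blast)
  with supp_x show "x \<in> {x. finite (supp x) \<and> supp x \<subseteq> Collect P}" by auto
next
  fix x :: "basis \<Rightarrow> 'k"
  assume "x \<in> {x. finite (supp x) \<and> supp x \<subseteq> Collect P}"
  then have fin: "finite (supp x)" and supp_x: "supp x \<subseteq> Collect P" by auto
  define c where "c a = x (inv e a)" for a :: "basis \<Rightarrow> 'k"
  have "x b = (\<Sum>a\<in>e ` supp x. c a * a b)" for b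
  proof -
    have "(\<Sum>a\<in>e ` supp x. c a * a b) = (\<Sum>b'\<in>supp x. x b' * e b' b)"
      using inj_e by (subst sum.reindex) (auto simp: c_def intro: inj_on_subset)
    also have "\<dots> = (\<Sum>b'\<in>supp x. if b' = b then x b' else 0)"
      by (intro sum.cong) (auto simp: e_def)
    also have "\<dots> = x b" using fin by (simp add: supp_def)
    finally show ?thesis by simp
  qed
  moreover have "e ` supp x \<subseteq> {e b | b. P b}" using supp_x by blast
  ultimately show "x \<in> lin_span {e b | b. P b}"
    unfolding lin_span_def using fin by blast
qed

fun deg :: "basis \<Rightarrow> int" where
  "deg (U k) = k"
| "deg (V k) = k"

lemma valid_iff_deg: "valid b \<longleftrightarrow> deg b \<ge> -1"
  by (cases b) (simp_all add: valid_def)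

lemma sc_nonzero_cases:
  assumes "(sc a b c :: 'k::field) \<noteq> 0"
  shows "(\<exists>i j. a = U i \<and> b = U j \<and> (c = U (i + j + 2) \<or> c = U (i + j) \<and> i \<noteq> j))
       \<or> (\<exists>i j. a = U i \<and> b = V j \<and> (c = V (i + j + 2) \<or> c = V (i + j) \<and> i \<noteq> j))
       \<or> (\<exists>i j. a = V i \<and> b = U j \<and> (c = V (i + j + 2) \<or> c = V (i + j) \<and> i \<noteq> j))"
  using assms by (cases a; cases b) (auto simp: uu_def vv_def e_def Let_def split: if_splits)

lemma finite_sc_nonzero: "finite {c. (sc a b c :: 'k::field) \<noteq> 0}"
proof (rule finite_subset)
  show "{c. (sc a b c :: 'k) \<noteq> 0} \<subseteq>
      {U (deg a + deg b + 2), U (deg a + deg b), V (deg a + deg b + 2), V (deg a + deg b)}"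
    using sc_nonzero_cases[of a b] by fastforce
qed simp

lemma sc_nonzero_deg:
  assumes "(sc a b c :: 'k::field) \<noteq> 0" "deg a \<ge> -1" "deg b \<ge> -1"
  shows "deg c \<ge> deg a + deg b" "deg c \<ge> -1"
  using sc_nonzero_cases[OF assms(1)] assms(2,3) by auto

lemma sc_U_V_nonzero: "(sc (U i) (V j) c :: 'k::field) \<noteq> 0 \<Longrightarrow> \<exists>k. c = V k"
  using sc_nonzero_cases by blast

lemma supp_brk:
  fixes x y :: "basis \<Rightarrow> 'k::field"
  shows "supp (brk x y) \<subseteq> (\<Union>a\<in>supp x. \<Union>b\<in>supp y. {c. sc a b c \<noteq> (0 :: 'k)})"
proof
  fix c
  assume "c \<in> supp (brk x y)"
  then have "(\<Sum>a\<in>supp x. \<Sum>b\<in>supp y. x a * y b * sc a b c) \<noteq> 0"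
    by (simp add: supp_def brk_def)
  then obtain a where a: "a \<in> supp x" "(\<Sum>b\<in>supp y. x a * y b * sc a b c) \<noteq> 0"
    by (meson sum.neutral)
  then obtain b where "b \<in> supp y" "x a * y b * sc a b c \<noteq> 0"
    by (meson sum.neutral)
  with a show "c \<in> (\<Union>a\<in>supp x. \<Union>b\<in>supp y. {c. sc a b c \<noteq> (0 :: 'k)})" by auto
qed

lemma brk_in_lin_span:
  assumes x: "x \<in> (lin_span {e b | b. P b} :: (basis \<Rightarrow> 'k::field) set)"
    and y: "y \<in> lin_span {e b | b. Q b}"
    and sc_closed: "\<And>a b c. P a \<Longrightarrow> Q b \<Longrightarrow> (sc a b c :: 'k) \<noteq> 0 \<Longrightarrow> R c"
  shows "brk x y \<in> lin_span {e b | b. R b}"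
proof -
  have x': "finite (supp x)" "supp x \<subseteq> Collect P"
   and y': "finite (supp y)" "supp y \<subseteq> Collect Q"
    using x y by (auto simp: lin_span_basis_eq)
  have "finite (supp (brk x y))"
    using x'(1) y'(1) finite_sc_nonzero by (blast intro: finite_subset[OF supp_brk])
  moreover have "supp (brk x y) \<subseteq> Collect R"
    using supp_brk x'(2) y'(2) sc_closed by blast
  ultimately show ?thesis by (simp add: lin_span_basis_eq)
qed

lemma FO_eq: "FO n = lin_span {e b | b. \<exists>k. b = U k \<and> k \<ge> n \<and> k \<ge> -1}"
  unfolding FO_def by (rule arg_cong[where f = lin_span]) blast

lemma FP_eq: "FP n = lin_span {e b | b. \<exists>k. b = V k \<and> k \<ge> n \<and> k \<ge> -1}"
  unfolding FP_def by (rule arg_cong[where f = lin_span]) blast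

lemma Fb_eq: "Fb n = lin_span {e b | b. deg b \<ge> n \<and> deg b \<ge> -1}"
  unfolding Fb_def by (rule arg_cong[where f = lin_span]) (auto, metis basis.exhaust deg.simps)

theorem proposition5p2:
  shows "(\<forall>n m. \<forall>x\<in>(FO n :: (basis \<Rightarrow> 'k::field_char_0) set). \<forall>y\<in>FP m. brk x y \<in> FP (n + m))
       \<and> (\<forall>n m. \<forall>x\<in>(Fb n :: (basis \<Rightarrow> 'k::field_char_0) set). \<forall>y\<in>Fb m. brk x y \<in> Fb (n + m))
       \<and> (bcca :: (basis \<Rightarrow> 'k::field_char_0) set) = Fb (-1)
       \<and> (\<forall>n\<ge>-1. (Fb (n + 1) :: (basis \<Rightarrow> 'k::field_char_0) set) \<subseteq> Fb n)"
proof (intro conjI allI ballI impI)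
  fix n m and x y :: "basis \<Rightarrow> 'k"
  assume "x \<in> FO n" "y \<in> FP m"
  then show "brk x y \<in> FP (n + m)"
    unfolding FO_eq FP_eq
  proof (rule brk_in_lin_span, elim exE conjE)
    fix a b c i j
    assume "sc a b c \<noteq> (0 :: 'k)" "a = U i" "b = V j" "i \<ge> n" "i \<ge> -1" "j \<ge> m" "j \<ge> -1"
    with sc_nonzero_deg[of a b c] sc_U_V_nonzero[of i j c]
    show "\<exists>k. c = V k \<and> k \<ge> n + m \<and> k \<ge> -1" by fastforce
  qed
next
  fix n m and x y :: "basis \<Rightarrow> 'k"
  assume "x \<in> Fb n" "y \<in> Fb m"
  then show "brk x y \<in> Fb (n + m)"
    unfolding Fb_eq by (rule brk_in_lin_span) (use sc_nonzero_deg in fastforce)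
next
  show "(bcca :: (basis \<Rightarrow> 'k) set) = Fb (-1)"
    unfolding bcca_def valid_iff_deg Fb_eq by simp
next
  fix n :: int
  show "(Fb (n + 1) :: (basis \<Rightarrow> 'k) set) \<subseteq> Fb n"
    unfolding Fb_eq lin_span_basis_eq by auto
qed

end
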